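(* For all complex $y$, $$\sum_{n=0}^{\infty}\binom{2n}{n}\frac{1}{2^n}R_n(y)=e^{y}\sum_{n=0}^{\infty}\frac{y^{2n+1}}{4^n(n!)^2(2n+1)}=e^{y}\left(yI_0(y)+\frac{\pi y}{2}\big[I_0(y)\mathbf{L}_1(y)-I_1(y)\mathbf{L}_0(y)\big]\right).$$
   Context: For an integer $n\ge 0$ and complex $y$, $R_n(y)=e^y-1-\frac{y}{1!}-\frac{y^2}{2!}-\dots-\frac{y^n}{n!}=e^y-\sum_{k=0}^n\frac{y^k}{k!}$. $I_0(z)=\sum_{n\ge0}\frac{z^{2n}}{4^n(n!)^2}$ and $I_1=I_0'$ are the modified Bessel functions of the first kind; $\mathbf{L}_0,\mathbf{L}_1$ are the modified Struve functions of orders $0$ and $1$. *)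

theory Defs
  imports "HOL-Analysis.Analysis"
begin

definition expR :: "nat \<Rightarrow> complex \<Rightarrow> complex" where
  "expR n y = exp y - (\<Sum>k\<le>n. y ^ k / of_nat (fact k))"

definition besselI0 :: "complex \<Rightarrow> complex" where
  "besselI0 z = (\<Sum>n. z ^ (2*n) / (4 ^ n * of_nat (fact n) ^ 2))"

definition besselI1 :: "complex \<Rightarrow> complex" where
  "besselI1 z = (\<Sum>k. (z/2) ^ (2*k+1) / (of_nat (fact k) * of_nat (fact (k+1))))"

definition struveL0 :: "complex \<Rightarrow> complex" where
  "struveL0 z = (\<Sum>k. (z/2) ^ (2*k+1) /
      complex_of_real (Gamma (real k + 3/2) * Gamma (real k + 3/2)))"

definition struveL1 :: "complex \<Rightarrow> complex" where
  "struveL1 z = (\<Sum>k. (z/2) ^ (2*k+2) /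
      complex_of_real (Gamma (real k + 3/2) * Gamma (real k + 5/2)))"

end

theory Submission
  imports Defs
begin

(*
  Write b n = (2n choose n) / 2^n and B N = b 0 + ... + b (N - 1). Summation by parts gives
    sum (n < N) b n R_n(y) = sum (k < N) B k y^k / k! + B N R_(N-1)(y),
  and the last term tends to 0 because |B N| <= 2^N while 2^N R_(N-1)(y) is bounded by a tail
  of the series of exp (2 |y|). So the left-hand side of the theorem is the exponential
  generating function of B, and that is e^y S(y), where S is the antiderivative of I_0 with
  S(0) = 0: both satisfy f' - f = e^y I_0(y) = sum b k y^k / k!, the last identity holding
  because both sides solve (x f')' = 2 x f' + f with f(0) = 1. Finally
  S = y I_0 + (pi/2) y (I_0 L_1 - I_1 L_0), because by I_0' = I_1, (x I_1)' = x I_0,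
  L_0' = 2/pi + L_1 and (x L_1)' = x L_0 the right-hand side has derivative I_0.
  All identities are proved between formal power series with infinite radius of convergence
  and then evaluated at y.
*)

lemma fact_le_four_pow_mult_fact_half_sq:
  "fact n \<le> (4 ^ n * fact (n div 2) ^ 2 :: 'a :: linordered_semidom)"
proof -
  define m where "m = n div 2"
  have "Suc m \<le> 2 ^ n"
  proof (cases "n = 0")
    case False
    have "m < n" using False by (simp add: m_def)
    also have "n < 2 ^ n" by (rule less_exp)
    finally show ?thesis by simp
  qed (simp add: m_def)
  have "fact n = (n choose m) * (fact m * fact (n - m) :: nat)"
    using binomial_fact_lemma[of m n] by (simp add: m_def mult_ac)
  also have "\<dots> \<le> 2 ^ n * (fact m * (2 ^ n * fact m))"
  proof (intro mult_mono mult_left_mono)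
    have "fact (n - m) \<le> (fact (Suc m) :: nat)"
      by (intro fact_mono) (simp add: m_def)
    also have "\<dots> = Suc m * fact m" by simp
    also have "\<dots> \<le> 2 ^ n * fact m"
      using \<open>Suc m \<le> 2 ^ n\<close> by (intro mult_right_mono) simp_all
    finally show "fact (n - m) \<le> 2 ^ n * (fact m :: nat)" .
  qed (simp_all add: binomial_le_pow2)
  also have "\<dots> = 4 ^ n * fact m ^ 2"
    by (simp add: power2_eq_square power_mult_distrib[symmetric] mult_ac)
  finally have "fact n \<le> (4 ^ n * fact m ^ 2 :: nat)" .
  hence "of_nat (fact n) \<le> (of_nat (4 ^ n * fact m ^ 2) :: 'a)"
    by (simp only: of_nat_le_iff)
  thus ?thesis by (simp add: m_def)
qed

lemma four_power_eq_two_power_sq: "(4 :: 'a :: comm_semiring_1) ^ k = (2 ^ k) ^ 2"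
  by (simp add: power_mult_distrib[symmetric] power2_eq_square)

lemma fps_conv_radius_eq_infinity_if_fact_half_bound:
  fixes f :: "'a :: {banach, real_normed_div_algebra} fps"
  assumes bound: "\<And>n. norm (fps_nth f n) * fact (n div 2) ^ 2 \<le> M"
  shows "fps_conv_radius f = \<infinity>"
  unfolding fps_conv_radius_def
proof (rule conv_radius_inftyI'')
  fix w :: 'a
  show "summable (\<lambda>n. fps_nth f n * w ^ n)"
  proof (rule summable_comparison_test')
    show "summable (\<lambda>n. M * (inverse (fact n) * (4 * norm w) ^ n))"
      by (intro summable_mult summable_exp)
    fix n
    have "fact n \<le> (4 ^ n * fact (n div 2) ^ 2 :: real)"
      by (rule fact_le_four_pow_mult_fact_half_sq)
    hence "norm (fps_nth f n) * fact n \<le> norm (fps_nth f n) * (fact (n div 2) ^ 2 * 4 ^ n)"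
      by (intro mult_left_mono) (simp_all add: mult.commute)
    also have "\<dots> = norm (fps_nth f n) * fact (n div 2) ^ 2 * 4 ^ n"
      by (simp add: mult_ac)
    also have "\<dots> \<le> M * 4 ^ n"
      using bound[of n] by (intro mult_right_mono) simp_all
    finally have "norm (fps_nth f n) \<le> M * 4 ^ n / fact n"
      by (simp add: pos_le_divide_eq)
    hence "norm (fps_nth f n) * norm w ^ n \<le> M * 4 ^ n / fact n * norm w ^ n"
      by (intro mult_right_mono) simp_all
    thus "norm (fps_nth f n * w ^ n) \<le> M * (inverse (fact n) * (4 * norm w) ^ n)"
      by (simp add: norm_mult norm_power power_mult_distrib field_simps)
  qed
qed

lemma fps_conv_radius_mult_eq_infinity [simp]:
  "fps_conv_radius f = \<infinity> \<Longrightarrow> fps_conv_radius g = \<infinity> \<Longrightarrow>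
     fps_conv_radius (f * g) = \<infinity>"
  using fps_conv_radius_mult[of f g] by simp

lemma fps_conv_radius_add_eq_infinity [simp]:
  "fps_conv_radius f = \<infinity> \<Longrightarrow> fps_conv_radius g = \<infinity> \<Longrightarrow>
     fps_conv_radius (f + g) = \<infinity>"
  using fps_conv_radius_add[of f g] by simp

lemma fps_conv_radius_diff_eq_infinity [simp]:
  "fps_conv_radius f = \<infinity> \<Longrightarrow> fps_conv_radius g = \<infinity> \<Longrightarrow>
     fps_conv_radius (f - g) = \<infinity>"
  using fps_conv_radius_diff[of f g] by simp

lemma sums_eval_fps_reindex:
  fixes f :: "'a :: {banach, real_normed_div_algebra} fps"
  assumes "strict_mono g" "\<And>n. n \<notin> range g \<Longrightarrow> fps_nth f n = 0"
    and "ereal (norm z) < fps_conv_radius f"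
  shows "(\<lambda>k. fps_nth f (g k) * z ^ g k) sums eval_fps f z"
  using sums_mono_reindex[of g "\<lambda>n. fps_nth f n * z ^ n"] sums_eval_fps[OF assms(3)] assms(1,2)
  by simp

lemma fps_eq_if_deriv_minus_eq:
  fixes f g :: "'a :: field_char_0 fps"
  assumes "fps_deriv f - f = fps_deriv g - g" and "fps_nth f 0 = fps_nth g 0"
  shows "f = g"
proof (rule fps_ext)
  fix n
  show "fps_nth f n = fps_nth g n"
  proof (induction n)
    case (Suc k)
    have "of_nat (Suc k) * fps_nth f (Suc k) - fps_nth f k
            = of_nat (Suc k) * fps_nth g (Suc k) - fps_nth g k"
      using arg_cong[OF assms(1), of "\<lambda>h. fps_nth h k"] by (simp add: algebra_simps)
    with Suc.IH show ?case
      by (simp del: of_nat_Suc)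
  qed (rule assms(2))
qed

lemma fps_deriv_minus_egf_partial_sums:
  fixes b :: "nat \<Rightarrow> 'a :: field_char_0"
  defines "f \<equiv> Abs_fps (\<lambda>n. (\<Sum>m<n. b m) / fact n)"
  shows "fps_deriv f - f = Abs_fps (\<lambda>n. b n / fact n)"
  by (rule fps_ext) (simp add: f_def field_simps del: of_nat_Suc)

lemma Gamma_plus1_pos: "(x :: real) > 0 \<Longrightarrow> Gamma (x + 1) = x * Gamma x"
  by (rule Gamma_plus1) (auto dest: nonpos_Ints_nonpos)

lemma Gamma_three_halves: "Gamma (3/2 :: real) = sqrt pi / 2"
  using Gamma_plus1_pos[of "1/2"] by (simp add: Gamma_one_half_real)

lemma fact_le_two_mult_Gamma_plus_three_halves: "fact k \<le> 2 * Gamma (real k + 3/2)"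
proof (induction k)
  case 0
  have "1 \<le> sqrt pi" using pi_gt3 by simp
  thus ?case by (simp add: Gamma_three_halves)
next
  case (Suc k)
  have "fact (Suc k) = (real k + 1) * fact k" by simp
  also have "\<dots> \<le> (real k + 3/2) * (2 * Gamma (real k + 3/2))"
    using Suc.IH by (intro mult_mono) auto
  also have "\<dots> = 2 * Gamma (real (Suc k) + 3/2)"
    using Gamma_plus1_pos[of "real k + 3/2"] by (simp add: add_ac)
  finally show ?case .
qed

lemma exp_remainder_sums:
  fixes y :: "'a :: {banach, real_normed_field}"
  shows "(\<lambda>i. y ^ (i + N) / fact (i + N)) sums (exp y - (\<Sum>k<N. y ^ k / fact k))"
proof -
  have "(\<lambda>n. y ^ n / fact n) sums exp y"
    using exp_converges[of y] by (simp add: scaleR_conv_of_real divide_inverse mult.commute)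
  thus ?thesis by (subst sums_iff_shift) simp
qed

lemma pow_mult_norm_exp_remainder_le:
  fixes y :: "'a :: {banach, real_normed_field}"
  assumes "1 \<le> C"
  shows "C ^ N * norm (exp y - (\<Sum>k<N. y ^ k / fact k))
           \<le> exp (C * norm y) - (\<Sum>k<N. (C * norm y) ^ k / fact k)"
proof -
  have "norm (\<Sum>i. y ^ (i + N) / fact (i + N)) \<le> (\<Sum>i. norm y ^ (i + N) / fact (i + N))"
    by (rule norm_suminf_le)
      (auto simp: norm_divide norm_power intro: sums_summable[OF exp_remainder_sums])
  hence "C ^ N * norm (exp y - (\<Sum>k<N. y ^ k / fact k))
           \<le> (\<Sum>i. C ^ N * (norm y ^ (i + N) / fact (i + N)))"
    using exp_remainder_sums[of y N] exp_remainder_sums[of "norm y" N] assms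
    by (subst suminf_mult) (auto simp: sums_iff intro: mult_left_mono)
  also have "\<dots> \<le> (\<Sum>i. (C * norm y) ^ (i + N) / fact (i + N))"
  proof (rule suminf_le)
    fix i
    have "C ^ N \<le> C ^ (i + N)" using assms by (intro power_increasing) simp_all
    thus "C ^ N * (norm y ^ (i + N) / fact (i + N)) \<le> (C * norm y) ^ (i + N) / fact (i + N)"
      by (simp add: power_mult_distrib divide_right_mono mult_right_mono)
  qed (use exp_remainder_sums sums_summable summable_mult in blast)+
  also have "\<dots> = exp (C * norm y) - (\<Sum>k<N. (C * norm y) ^ k / fact k)"
    using exp_remainder_sums[of "C * norm y" N] by (simp add: sums_iff)
  finally show ?thesis .
qed

lemma sum_mult_exp_remainder:
  "(\<Sum>n<N. b n * expR n y) = (\<Sum>k<N. (\<Sum>m<k. b m) / fact k * y ^ k)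
                              + (\<Sum>m<N. b m) * (exp y - (\<Sum>k<N. y ^ k / fact k))"
proof (induction N)
  case (Suc N)
  have expR_N: "expR N y = exp y - (\<Sum>k<N. y ^ k / fact k) - y ^ N / fact N"
    by (simp add: expR_def lessThan_Suc_atMost[symmetric])
  show ?case by (simp add: Suc.IH expR_N algebra_simps)
qed simp

lemma sums_mult_exp_remainder:
  assumes bound: "\<And>N. norm (\<Sum>m<N. b m) \<le> C ^ N" and "1 \<le> C"
    and "(\<lambda>k. (\<Sum>m<k. b m) / fact k * y ^ k) sums s"
  shows "(\<lambda>n. b n * expR n y) sums s"
proof -
  let ?R = "\<lambda>N. exp y - (\<Sum>k<N. y ^ k / fact k)"
  have "(\<lambda>N. (\<Sum>m<N. b m) * ?R N) \<longlonglongrightarrow> 0"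
  proof (rule Lim_null_comparison)
    show "\<forall>\<^sub>F N in sequentially. norm ((\<Sum>m<N. b m) * ?R N)
            \<le> exp (C * norm y) - (\<Sum>k<N. (C * norm y) ^ k / fact k)"
    proof (intro always_eventually allI)
      fix N
      have "norm ((\<Sum>m<N. b m) * ?R N) \<le> C ^ N * norm (?R N)"
        unfolding norm_mult by (intro mult_right_mono bound) simp
      also have "\<dots> \<le> exp (C * norm y) - (\<Sum>k<N. (C * norm y) ^ k / fact k)"
        using \<open>1 \<le> C\<close> by (rule pow_mult_norm_exp_remainder_le)
      finally show "norm ((\<Sum>m<N. b m) * ?R N)
                      \<le> exp (C * norm y) - (\<Sum>k<N. (C * norm y) ^ k / fact k)" .
    qed
    have "(\<lambda>N. \<Sum>k<N. (C * norm y) ^ k / fact k) \<longlonglongrightarrow> exp (C * norm y)"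
      using exp_remainder_sums[of "C * norm y" 0] by (simp add: sums_def)
    hence "(\<lambda>N. exp (C * norm y) - (\<Sum>k<N. (C * norm y) ^ k / fact k))
             \<longlonglongrightarrow> exp (C * norm y) - exp (C * norm y)"
      by (intro tendsto_diff tendsto_const)
    thus "(\<lambda>N. exp (C * norm y) - (\<Sum>k<N. (C * norm y) ^ k / fact k)) \<longlonglongrightarrow> 0"
      by simp
  qed
  with assms(3) show ?thesis
    unfolding sums_def sum_mult_exp_remainder by (simp add: tendsto_add[of _ s _ _ 0, simplified])
qed

definition fps_besselI0 :: "complex fps" where
  "fps_besselI0 = Abs_fps (\<lambda>n. if even n then 1 / (2 ^ n * fact (n div 2) ^ 2) else 0)"

definition fps_besselI1 :: "complex fps" where
  "fps_besselI1 =
     Abs_fps (\<lambda>n. if odd n then 1 / (2 ^ n * fact (n div 2) * fact (Suc (n div 2))) else 0)"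

(* At n = 2k+1, resp. n = 2k+2, the Gamma factors below are those of struveL0, resp. struveL1. *)
definition fps_struveL0 :: "complex fps" where
  "fps_struveL0 =
     Abs_fps (\<lambda>n. of_real (if odd n then 1 / (2 ^ n * Gamma (real n / 2 + 1) ^ 2) else 0))"

definition fps_struveL1 :: "complex fps" where
  "fps_struveL1 = Abs_fps (\<lambda>n. of_real (if even n \<and> n \<noteq> 0
     then 1 / (2 ^ n * Gamma (real n / 2 + 1/2) * Gamma (real n / 2 + 3/2)) else 0))"

lemma fps_conv_radius_besselI0 [simp]: "fps_conv_radius fps_besselI0 = \<infinity>"
  by (rule fps_conv_radius_eq_infinity_if_fact_half_bound[of _ 1])
    (auto simp: fps_besselI0_def norm_divide norm_mult norm_power)

lemma fps_conv_radius_besselI1 [simp]: "fps_conv_radius fps_besselI1 = \<infinity>"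
proof (rule fps_conv_radius_eq_infinity_if_fact_half_bound)
  fix n :: nat
  define k where "k = n div 2"
  have "norm (fps_nth fps_besselI1 n) * fact k ^ 2 \<le> 1 / (2 ^ n * real (Suc k))"
    by (simp add: fps_besselI1_def k_def norm_divide norm_mult norm_power power2_eq_square
        flip: of_nat_Suc)
  also have "\<dots> \<le> 1"
    using mult_mono[of 1 "2 ^ n" 1 "real (Suc k)"] by simp
  finally show "norm (fps_nth fps_besselI1 n) * fact (n div 2) ^ 2 \<le> 1"
    by (simp add: k_def)
qed

lemma fps_conv_radius_integral0_besselI0 [simp]:
  "fps_conv_radius (fps_integral0 fps_besselI0) = \<infinity>"
proof (rule fps_conv_radius_eq_infinity_if_fact_half_bound)
  fix n :: nat
  show "norm (fps_nth (fps_integral0 fps_besselI0) n) * fact (n div 2) ^ 2 \<le> 1"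
  proof (cases "odd n")
    case True
    then obtain k where n: "n = Suc (2 * k)" by (auto elim: oddE)
    have "norm (fps_nth (fps_integral0 fps_besselI0) n) * fact k ^ 2 = 1 / (real n * 2 ^ (2 * k))"
      by (simp add: n fps_besselI0_def norm_mult norm_divide norm_power norm_inverse
          divide_inverse flip: of_nat_Suc)
    also have "\<dots> \<le> 1"
      using mult_mono[of 1 "real n" 1 "2 ^ (2 * k)"] by (simp add: n del: of_nat_Suc)
    finally show ?thesis by (simp add: n)
  qed (cases n; auto simp: fps_besselI0_def)
qed

lemma fps_conv_radius_struveL0 [simp]: "fps_conv_radius fps_struveL0 = \<infinity>"
proof (rule fps_conv_radius_eq_infinity_if_fact_half_bound)
  fix n :: nat
  show "norm (fps_nth fps_struveL0 n) * fact (n div 2) ^ 2 \<le> 4"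
  proof (cases "odd n")
    case True
    define k where "k = n div 2"
    define G where "G = Gamma (real k + 3/2)"
    have "G > 0" unfolding G_def by (intro Gamma_real_pos) simp
    have "real n / 2 + 1 = real k + 3/2" using True by (auto simp: k_def field_simps elim!: oddE)
    hence "norm (fps_nth fps_struveL0 n) * fact k ^ 2 = 1 / (2 ^ n * G ^ 2) * fact k ^ 2"
      using True by (simp add: fps_struveL0_def G_def norm_divide norm_mult norm_power)
    also have "\<dots> \<le> 1 / (2 ^ n * G ^ 2) * (2 * G) ^ 2"
      using fact_le_two_mult_Gamma_plus_three_halves[of k]
      by (intro mult_left_mono power_mono) (simp_all add: G_def)
    also have "\<dots> = 4 / 2 ^ n"
      using \<open>G > 0\<close> by (simp add: power_mult_distrib)
    also have "\<dots> \<le> 4"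
      by (simp add: divide_le_eq)
    finally show ?thesis by (simp add: k_def)
  qed (simp add: fps_struveL0_def)
qed

lemma fps_conv_radius_struveL1 [simp]: "fps_conv_radius fps_struveL1 = \<infinity>"
proof (rule fps_conv_radius_eq_infinity_if_fact_half_bound)
  fix n :: nat
  show "norm (fps_nth fps_struveL1 n) * fact (n div 2) ^ 2 \<le> 4"
  proof (cases "even n \<and> n \<noteq> 0")
    case True
    define k where "k = n div 2 - 1"
    have n: "n = 2 * k + 2" using True by (auto simp: k_def elim!: evenE)
    define G where "G = Gamma (real k + 3/2)"
    define G' where "G' = Gamma (real (Suc k) + 3/2)"
    have "G > 0" "G' > 0" unfolding G_def G'_def by (intro Gamma_real_pos; simp)+
    have "real n / 2 + 1/2 = real k + 3/2" "real n / 2 + 3/2 = real (Suc k) + 3/2"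
      by (simp_all add: n field_simps)
    hence "norm (fps_nth fps_struveL1 n) = 1 / (2 ^ n * G * G')"
      using True \<open>G > 0\<close> \<open>G' > 0\<close>
      by (simp only: fps_struveL1_def fps_nth_Abs_fps if_True norm_of_real G_def G'_def)
        (simp add: abs_mult)
    moreover have "fact (Suc k) ^ 2 = real (Suc k) * (fact k * fact (Suc k))"
      by (simp add: power2_eq_square)
    ultimately have "norm (fps_nth fps_struveL1 n) * fact (Suc k) ^ 2
            = 1 / (2 ^ n * G * G') * (real (Suc k) * (fact k * fact (Suc k)))"
      by simp
    also have "\<dots> \<le> 1 / (2 ^ n * G * G') * (real (Suc k) * ((2 * G) * (2 * G')))"
      using fact_le_two_mult_Gamma_plus_three_halves[of k]
        fact_le_two_mult_Gamma_plus_three_halves[of "Suc k"] \<open>G > 0\<close> \<open>G' > 0\<close>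
      by (intro mult_left_mono mult_mono) (simp_all add: G_def G'_def)
    also have "\<dots> = 4 * (real (Suc k) / 2 ^ n)"
      using \<open>G > 0\<close> \<open>G' > 0\<close> by (simp del: of_nat_Suc)
    also have "\<dots> \<le> 4"
    proof -
      have "Suc k \<le> 2 ^ n"
        using less_exp[of n] n by linarith
      hence "real (Suc k) \<le> 2 ^ n"
        by (metis of_nat_le_iff of_nat_numeral of_nat_power)
      thus ?thesis by (simp add: divide_le_eq del: of_nat_Suc)
    qed
    finally show ?thesis by (simp add: n)
  qed (auto simp: fps_struveL1_def)
qed

lemma eval_fps_besselI0: "eval_fps fps_besselI0 z = besselI0 z"
proof -
  have "(\<lambda>k. fps_nth fps_besselI0 (2 * k) * z ^ (2 * k)) sums eval_fps fps_besselI0 z"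
  proof (rule sums_eval_fps_reindex)
    show "fps_nth fps_besselI0 n = 0" if "n \<notin> range (\<lambda>k. 2 * k)" for n
      using that by (auto simp: fps_besselI0_def)
  qed (simp_all add: strict_mono_def)
  thus ?thesis by (simp add: besselI0_def sums_iff fps_besselI0_def power_mult)
qed

lemma eval_fps_besselI1: "eval_fps fps_besselI1 z = besselI1 z"
proof -
  have "(\<lambda>k. fps_nth fps_besselI1 (2 * k + 1) * z ^ (2 * k + 1)) sums eval_fps fps_besselI1 z"
  proof (rule sums_eval_fps_reindex)
    show "fps_nth fps_besselI1 n = 0" if "n \<notin> range (\<lambda>k. 2 * k + 1)" for n
      using that by (auto simp: fps_besselI1_def elim!: oddE)
  qed (simp_all add: strict_mono_def)
  moreover have "fps_nth fps_besselI1 (2 * k + 1) * z ^ (2 * k + 1)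
                   = (z/2) ^ (2*k+1) / (of_nat (fact k) * of_nat (fact (k+1)))" for k
    by (simp add: fps_besselI1_def power_divide algebra_simps)
  ultimately show ?thesis by (simp add: besselI1_def sums_iff)
qed

lemma eval_fps_struveL0: "eval_fps fps_struveL0 z = struveL0 z"
proof -
  have "(\<lambda>k. fps_nth fps_struveL0 (2 * k + 1) * z ^ (2 * k + 1)) sums eval_fps fps_struveL0 z"
  proof (rule sums_eval_fps_reindex)
    show "fps_nth fps_struveL0 n = 0" if "n \<notin> range (\<lambda>k. 2 * k + 1)" for n
      using that by (auto simp: fps_struveL0_def elim!: oddE)
  qed (simp_all add: strict_mono_def)
  moreover have "fps_nth fps_struveL0 (2 * k + 1) * z ^ (2 * k + 1)
      = (z/2) ^ (2*k+1) / complex_of_real (Gamma (real k + 3/2) * Gamma (real k + 3/2))" for k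
  proof -
    have "Gamma (real (2 * k + 1) / 2 + 1) = Gamma (real k + 3/2)" by (simp add: field_simps)
    thus ?thesis by (simp add: fps_struveL0_def power_divide power2_eq_square)
  qed
  ultimately show ?thesis by (simp add: struveL0_def sums_iff)
qed

lemma eval_fps_struveL1: "eval_fps fps_struveL1 z = struveL1 z"
proof -
  have "(\<lambda>k. fps_nth fps_struveL1 (2 * k + 2) * z ^ (2 * k + 2)) sums eval_fps fps_struveL1 z"
  proof (rule sums_eval_fps_reindex)
    show "fps_nth fps_struveL1 n = 0" if "n \<notin> range (\<lambda>k. 2 * k + 2)" for n
    proof (cases "even n \<and> n \<noteq> 0")
      case True
      hence "n = 2 * (n div 2 - 1) + 2" by auto
      with that show ?thesis by blast
    qed (auto simp: fps_struveL1_def)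
  qed (simp_all add: strict_mono_def)
  moreover have "fps_nth fps_struveL1 (2 * k + 2) * z ^ (2 * k + 2)
      = (z/2) ^ (2*k+2) / complex_of_real (Gamma (real k + 3/2) * Gamma (real k + 5/2))" for k
  proof -
    have "Gamma (real (2 * k + 2) / 2 + 1/2) = Gamma (real k + 3/2)"
      "Gamma (real (2 * k + 2) / 2 + 3/2) = Gamma (real k + 5/2)"
      by (simp_all add: field_simps)
    thus ?thesis by (simp add: fps_struveL1_def power_divide mult_ac)
  qed
  ultimately show ?thesis by (simp add: struveL1_def sums_iff)
qed

lemma sums_integral0_besselI0:
  "(\<lambda>n. z ^ (2*n+1) / (4 ^ n * of_nat (fact n) ^ 2 * of_nat (2*n+1)))
     sums eval_fps (fps_integral0 fps_besselI0) z"
proof -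
  have "(\<lambda>k. fps_nth (fps_integral0 fps_besselI0) (2 * k + 1) * z ^ (2 * k + 1))
          sums eval_fps (fps_integral0 fps_besselI0) z"
  proof (rule sums_eval_fps_reindex)
    show "fps_nth (fps_integral0 fps_besselI0) n = 0" if "n \<notin> range (\<lambda>k. 2 * k + 1)" for n
      using that by (cases n) (auto simp: fps_besselI0_def)
  qed (simp_all add: strict_mono_def)
  moreover have "fps_nth (fps_integral0 fps_besselI0) (2 * k + 1) * z ^ (2 * k + 1)
      = z ^ (2*k+1) / (4 ^ k * of_nat (fact k) ^ 2 * of_nat (2*k+1))" for k
    by (simp add: fps_besselI0_def power_mult four_power_eq_two_power_sq field_simps)
  ultimately show ?thesis by simp
qed

lemma fps_deriv_besselI0: "fps_deriv fps_besselI0 = fps_besselI1"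
proof (rule fps_ext)
  fix n :: nat
  show "fps_nth (fps_deriv fps_besselI0) n = fps_nth fps_besselI1 n"
  proof (cases "even n")
    case False
    then obtain k where n: "n = 2 * k + 1" by (auto elim: oddE)
    show ?thesis
      by (simp add: fps_besselI0_def fps_besselI1_def n field_simps del: of_nat_Suc)
        (simp add: power2_eq_square algebra_simps)
  qed (simp add: fps_besselI0_def fps_besselI1_def)
qed

lemma fps_X_mult_deriv_besselI1: "fps_X * fps_deriv fps_besselI1 = fps_X * fps_besselI0 - fps_besselI1"
proof (rule fps_ext)
  fix n :: nat
  show "fps_nth (fps_X * fps_deriv fps_besselI1) n = fps_nth (fps_X * fps_besselI0 - fps_besselI1) n"
  proof (cases n)
    case (Suc m)
    show ?thesis
    proof (cases "even m")
      case True
      then obtain k where m: "m = 2 * k" by (auto elim: evenE)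
      show ?thesis
        by (simp add: fps_besselI0_def fps_besselI1_def Suc m field_simps del: of_nat_Suc)
          (simp add: power2_eq_square algebra_simps)
    qed (simp add: fps_besselI0_def fps_besselI1_def Suc)
  qed (simp add: fps_besselI1_def)
qed

lemma fps_deriv_struveL0: "fps_deriv fps_struveL0 = fps_const (of_real (2 / pi)) + fps_struveL1"
proof (rule fps_ext)
  fix n :: nat
  consider "n = 0" | "odd n" | "even n" "n \<noteq> 0" by blast
  thus "fps_nth (fps_deriv fps_struveL0) n = fps_nth (fps_const (of_real (2 / pi)) + fps_struveL1) n"
  proof cases
    case 1
    have "fps_nth (fps_deriv fps_struveL0) 0 = of_real (1 / (2 ^ 1 * Gamma (3/2) ^ 2))"
      by (simp add: fps_struveL0_def)
    also have "1 / (2 ^ 1 * Gamma (3/2) ^ 2) = 2 / pi"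
      by (simp add: Gamma_three_halves power_divide)
    finally show ?thesis using 1 by (simp add: fps_struveL1_def)
  next
    case 3
    define x where "x = real n / 2 + 1/2"
    have "x > 0" by (simp add: x_def add_nonneg_pos)
    hence "Gamma x > 0" by (rule Gamma_real_pos)
    have G: "Gamma (real (Suc n) / 2 + 1) = x * Gamma x" "Gamma (real n / 2 + 3/2) = x * Gamma x"
      "Gamma (real n / 2 + 1/2) = Gamma x"
      using Gamma_plus1_pos[OF \<open>x > 0\<close>] by (simp_all add: x_def field_simps)
    have "fps_nth (fps_deriv fps_struveL0) n
            = of_real (real (Suc n) / (2 ^ Suc n * Gamma (real (Suc n) / 2 + 1) ^ 2))"
      using 3 by (simp add: fps_struveL0_def)
    also have "real (Suc n) / (2 ^ Suc n * Gamma (real (Suc n) / 2 + 1) ^ 2)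
            = 1 / (2 ^ n * Gamma (real n / 2 + 1/2) * Gamma (real n / 2 + 3/2))"
    proof -
      have "real (Suc n) = 2 * x" by (simp add: x_def)
      thus ?thesis
        unfolding G using \<open>x > 0\<close> \<open>Gamma x > 0\<close> by (simp add: field_simps power2_eq_square)
    qed
    finally show ?thesis using 3 by (simp add: fps_struveL1_def)
  qed (simp add: fps_struveL0_def fps_struveL1_def odd_pos)
qed

lemma fps_X_mult_deriv_struveL1:
  "fps_X * fps_deriv fps_struveL1 = fps_X * fps_struveL0 - fps_struveL1"
proof (rule fps_ext)
  fix n :: nat
  show "fps_nth (fps_X * fps_deriv fps_struveL1) n = fps_nth (fps_X * fps_struveL0 - fps_struveL1) n"
  proof (cases n)
    case (Suc m)
    show ?thesis
    proof (cases "odd m")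
      case True
      define y where "y = real m / 2 + 1"
      have "y > 0" by (simp add: y_def add_nonneg_pos)
      hence "Gamma y \<noteq> 0" by (metis Gamma_real_pos less_irrefl)
      have G: "Gamma (real (Suc m) / 2 + 1/2) = Gamma y" "Gamma (real (Suc m) / 2 + 3/2) = y * Gamma y"
        "Gamma (real m / 2 + 1) = Gamma y"
        using Gamma_plus1_pos[OF \<open>y > 0\<close>] by (simp_all add: y_def field_simps)
      let ?A = "1 / (2 ^ Suc m * Gamma (real (Suc m) / 2 + 1/2) * Gamma (real (Suc m) / 2 + 3/2))"
      let ?B = "1 / (2 ^ m * Gamma (real m / 2 + 1) ^ 2)"
      have "fps_nth (fps_X * fps_deriv fps_struveL1) n = of_real (real (Suc m) * ?A)"
        using True by (simp add: Suc fps_struveL1_def)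
      also have "real (Suc m) * ?A = ?B - ?A"
      proof -
        have m: "real m = 2 * y - 2" by (simp add: y_def)
        show ?thesis
          unfolding G using \<open>y > 0\<close> \<open>Gamma y \<noteq> 0\<close> by (simp add: m field_simps power2_eq_square)
      qed
      also have "of_real (?B - ?A) = fps_nth (fps_X * fps_struveL0 - fps_struveL1) n"
        using True by (simp add: Suc fps_struveL0_def fps_struveL1_def)
      finally show ?thesis .
    qed (simp add: Suc fps_struveL0_def fps_struveL1_def)
  qed (simp add: fps_struveL1_def)
qed

definition scaled_central_binomial :: "nat \<Rightarrow> complex" where
  "scaled_central_binomial n = of_nat (2 * n choose n) / 2 ^ n"

lemma scaled_central_binomial_Suc:
  "of_nat (Suc n) * scaled_central_binomial (Suc n) = of_nat (2 * n + 1) * scaled_central_binomial n"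
proof -
  have central: "of_nat (2 * k choose k) = (fact (2 * k) / (fact k * fact k) :: complex)" for k
    by (simp add: binomial_fact mult_2)
  show ?thesis
    unfolding scaled_central_binomial_def central
    by (simp add: field_simps del: of_nat_Suc) (simp add: algebra_simps)
qed

lemma norm_sum_scaled_central_binomial_le: "norm (\<Sum>m<N. scaled_central_binomial m) \<le> 2 ^ N"
proof -
  have "norm (scaled_central_binomial m) \<le> 2 ^ m" for m
  proof -
    have "real (2 * m choose m) \<le> 2 ^ (2 * m)"
      by (metis binomial_le_pow2 of_nat_le_iff of_nat_numeral of_nat_power)
    thus ?thesis
      by (simp add: scaled_central_binomial_def norm_divide norm_power power_mult
          pos_divide_le_eq four_power_eq_two_power_sq power2_eq_square)
  qed
  hence "norm (\<Sum>m<N. scaled_central_binomial m) \<le> (\<Sum>m<N. 2 ^ m)"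
    by (intro order.trans[OF norm_sum] sum_mono)
  also have "\<dots> \<le> (2 :: real) ^ N"
    by (induction N) simp_all
  finally show ?thesis .
qed

lemma fps_exp_mult_besselI0_ode:
  defines "F \<equiv> fps_exp 1 * fps_besselI0"
  shows "fps_deriv (fps_X * fps_deriv F) = 2 * (fps_X * fps_deriv F) + F"
proof -
  define E :: "complex fps" where "E = fps_exp 1"
  have E': "fps_deriv E = E" by (simp add: E_def)
  have XF': "fps_X * fps_deriv F = E * (fps_X * fps_besselI0) + E * (fps_X * fps_besselI1)"
    by (simp add: F_def E_def [symmetric] E' fps_deriv_besselI0 algebra_simps)
  show ?thesis
    unfolding XF'
    by (simp add: E' F_def E_def [symmetric] fps_deriv_besselI0 fps_X_mult_deriv_besselI1
        algebra_simps)
qed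

lemma fps_exp_mult_besselI0:
  "fps_exp 1 * fps_besselI0 = Abs_fps (\<lambda>n. scaled_central_binomial n / fact n)"
proof (rule fps_ext)
  fix n
  define F where "F = fps_exp 1 * fps_besselI0"
  have ode: "fps_deriv (fps_X * fps_deriv F) = 2 * (fps_X * fps_deriv F) + F"
    unfolding F_def by (rule fps_exp_mult_besselI0_ode)
  have rec: "of_nat (Suc k) ^ 2 * fps_nth F (Suc k) = of_nat (2 * k + 1) * fps_nth F k" for k
    using arg_cong[OF ode, of "\<lambda>h. fps_nth h k"]
    by (cases k) (simp_all add: numeral_fps_const power2_eq_square algebra_simps)
  show "fps_nth F n = fps_nth (Abs_fps (\<lambda>n. scaled_central_binomial n / fact n)) n"
  proof (induction n)
    case 0
    show ?case by (simp add: F_def fps_besselI0_def scaled_central_binomial_def)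
  next
    case (Suc k)
    have scb: "scaled_central_binomial (Suc k)
                 = of_nat (2 * k + 1) * scaled_central_binomial k / of_nat (Suc k)"
      using scaled_central_binomial_Suc[of k] by (simp add: eq_divide_eq mult.commute del: of_nat_Suc)
    have "of_nat (Suc k) ^ 2 * fps_nth F (Suc k)
            = of_nat (Suc k) ^ 2 * (scaled_central_binomial (Suc k) / fact (Suc k))"
      unfolding rec Suc.IH scb by (simp add: field_simps power2_eq_square del: of_nat_Suc)
    moreover have "of_nat (Suc k) ^ 2 \<noteq> (0 :: complex)"
      by (simp del: of_nat_Suc)
    ultimately show ?case by (metis mult_left_cancel fps_nth_Abs_fps)
  qed
qed

lemma egf_partial_sums_scaled_central_binomial:
  "Abs_fps (\<lambda>n. (\<Sum>m<n. scaled_central_binomial m) / fact n)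
     = fps_exp 1 * fps_integral0 fps_besselI0"
proof (rule fps_eq_if_deriv_minus_eq)
  have "fps_deriv (fps_exp 1 * fps_integral0 fps_besselI0) - fps_exp 1 * fps_integral0 fps_besselI0
          = fps_exp 1 * fps_besselI0"
    by (simp add: fps_deriv_fps_integral)
  thus "fps_deriv (Abs_fps (\<lambda>n. (\<Sum>m<n. scaled_central_binomial m) / fact n))
          - Abs_fps (\<lambda>n. (\<Sum>m<n. scaled_central_binomial m) / fact n)
        = fps_deriv (fps_exp 1 * fps_integral0 fps_besselI0) - fps_exp 1 * fps_integral0 fps_besselI0"
    by (simp only: fps_deriv_minus_egf_partial_sums fps_exp_mult_besselI0)
qed simp

lemma fps_integral0_besselI0_eq:
  "fps_integral0 fps_besselI0 = fps_X * fps_besselI0 + fps_const (of_real pi / 2) *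
     (fps_X * (fps_besselI0 * fps_struveL1 - fps_besselI1 * fps_struveL0))"
  (is "_ = ?G")
proof -
  define W where "W = fps_besselI0 * fps_struveL1 - fps_besselI1 * fps_struveL0"
  have XW': "fps_X * fps_deriv W = - W - fps_const (of_real (2 / pi)) * (fps_X * fps_besselI1)"
  proof -
    have "fps_X * fps_deriv W
            = fps_besselI0 * (fps_X * fps_deriv fps_struveL1) + (fps_X * fps_besselI1) * fps_struveL1
              - ((fps_X * fps_besselI1) * fps_deriv fps_struveL0
                 + (fps_X * fps_deriv fps_besselI1) * fps_struveL0)"
      by (simp add: W_def fps_deriv_besselI0 algebra_simps)
    thus ?thesis
      unfolding fps_X_mult_deriv_struveL1 fps_X_mult_deriv_besselI1 fps_deriv_struveL0 W_def
      by (simp add: algebra_simps)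
  qed
  have inverse_consts: "fps_const (of_real pi / 2) * fps_const (of_real (2 / pi)) = (1 :: complex fps)"
    by (simp add: field_simps flip: fps_const_mult)
  have "fps_deriv ?G = fps_besselI0 + fps_X * fps_besselI1
          + fps_const (of_real pi / 2) * (W + fps_X * fps_deriv W)"
    unfolding W_def[symmetric] by (simp add: fps_deriv_besselI0 algebra_simps)
  also have "\<dots> = fps_besselI0 + fps_X * fps_besselI1
          - fps_const (of_real pi / 2) * fps_const (of_real (2 / pi)) * (fps_X * fps_besselI1)"
    unfolding XW' by (simp add: algebra_simps)
  finally have "fps_deriv ?G = fps_besselI0"
    unfolding inverse_consts by simp
  hence "fps_integral0 fps_besselI0 = fps_integral0 (fps_deriv ?G)" by (simp only:)
  also have "\<dots> = ?G - fps_const (fps_nth ?G 0)" by (rule fps_integral0_deriv)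
  also have "\<dots> = ?G" by simp
  finally show ?thesis .
qed

theorem mainTheorem14:
  fixes y :: complex
  shows "summable (\<lambda>n. y ^ (2*n+1) / (4 ^ n * of_nat (fact n) ^ 2 * of_nat (2*n+1)))
    \<and> (\<lambda>n. of_nat (2*n choose n) / 2 ^ n * expR n y) sums
        (exp y * (\<Sum>n. y ^ (2*n+1) / (4 ^ n * of_nat (fact n) ^ 2 * of_nat (2*n+1))))
    \<and> exp y * (\<Sum>n. y ^ (2*n+1) / (4 ^ n * of_nat (fact n) ^ 2 * of_nat (2*n+1)))
        = exp y * (y * besselI0 y + of_real pi * y / 2 *
            (besselI0 y * struveL1 y - besselI1 y * struveL0 y))"
proof -
  let ?S = "fps_integral0 fps_besselI0"
  have "(\<lambda>k. fps_nth (fps_exp 1 * ?S) k * y ^ k) sums eval_fps (fps_exp 1 * ?S) y"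
    by (rule sums_eval_fps) simp
  moreover have "fps_nth (fps_exp 1 * ?S) k = (\<Sum>m<k. scaled_central_binomial m) / fact k" for k
    by (simp flip: egf_partial_sums_scaled_central_binomial)
  ultimately have egf: "(\<lambda>k. (\<Sum>m<k. scaled_central_binomial m) / fact k * y ^ k)
                          sums (exp y * eval_fps ?S y)"
    by (simp add: eval_fps_mult)
  have "(\<lambda>n. scaled_central_binomial n * expR n y) sums (exp y * eval_fps ?S y)"
    by (rule sums_mult_exp_remainder[OF norm_sum_scaled_central_binomial_le _ egf]) simp
  moreover have "eval_fps ?S y = y * besselI0 y + of_real pi * y / 2 *
                   (besselI0 y * struveL1 y - besselI1 y * struveL0 y)"
    by (simp add: fps_integral0_besselI0_eq eval_fps_add eval_fps_mult eval_fps_diff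
        eval_fps_besselI0 eval_fps_besselI1 eval_fps_struveL0 eval_fps_struveL1 algebra_simps)
  ultimately show ?thesis
    using sums_integral0_besselI0[of y] by (simp add: sums_iff scaled_central_binomial_def)
qed

end
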